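(* Let $(L,L_0)$ be a nonlinear primitive Lie superalgebra. Then $L$ is a semisimple Lie superalgebra and $L$ is not the direct sum of two nonzero ideals.
   Context: All Lie superalgebras are finite-dimensional over $\mathbb{C}$. A pair $(L,L_0)$, with $L=L_{\bar 0}\oplus L_{\bar 1}$ a Lie superalgebra and $L_0$ a subalgebra, is called transitive if $L_0$ contains no nonzero ideal of $L$. A transitive pair is nonlinear primitive if (a) $L_0$ is a maximal subalgebra of $L$, and (b) the subspace $L_1=\{x\in L_0 : [x,L]\subset L_0\}$ (the kernel of the isotropy representation of $L_0$ on $L/L_0$) is nonzero. A Lie superalgebra is semisimple if its radical is zero, equivalently if it contains no nonzero abelian ideal. *)

theory Defs
  imports Complex_Main
begin

text \<open>The underlying space is the whole type 'v (an abelian group) with a complex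
  scalar multiplication sc; the grading is given by the even part E and the
  odd part Od (subspaces with L = E (+) Od); br is the super bracket.\<close>

definition hom_part :: "'v set \<Rightarrow> 'v set \<Rightarrow> bool \<Rightarrow> 'v set" where
  "hom_part E Od p = (if p then Od else E)"

definition ssign :: "bool \<Rightarrow> bool \<Rightarrow> 'v::ab_group_add \<Rightarrow> 'v" where
  "ssign p q v = (if p \<and> q then - v else v)"

definition lie_superalgebra ::
  "(complex \<Rightarrow> 'v::ab_group_add \<Rightarrow> 'v) \<Rightarrow> 'v set \<Rightarrow> 'v set \<Rightarrow> ('v \<Rightarrow> 'v \<Rightarrow> 'v) \<Rightarrow> bool" where
  "lie_superalgebra sc E Od br \<longleftrightarrow>
     vector_space sc \<and>
     (\<exists>B. finite B \<and> module.span sc B = UNIV) \<and>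
     module.subspace sc E \<and> module.subspace sc Od \<and>
     E \<inter> Od = {0} \<and> (\<forall>v. \<exists>x\<in>E. \<exists>y\<in>Od. v = x + y) \<and>
     (\<forall>x y z. br (x + y) z = br x z + br y z) \<and>
     (\<forall>x y z. br x (y + z) = br x y + br x z) \<and>
     (\<forall>a x y. br (sc a x) y = sc a (br x y)) \<and>
     (\<forall>a x y. br x (sc a y) = sc a (br x y)) \<and>
     (\<forall>p q x y. x \<in> hom_part E Od p \<longrightarrow> y \<in> hom_part E Od q \<longrightarrow>
        br x y \<in> hom_part E Od (p \<noteq> q)) \<and>
     (\<forall>p q x y. x \<in> hom_part E Od p \<longrightarrow> y \<in> hom_part E Od q \<longrightarrow>
        br x y = - ssign p q (br y x)) \<and>
     (\<forall>p q x y z. x \<in> hom_part E Od p \<longrightarrow> y \<in> hom_part E Od q \<longrightarrow>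
        br x (br y z) = br (br x y) z + ssign p q (br y (br x z)))"

definition graded_subspace ::
  "(complex \<Rightarrow> 'v::ab_group_add \<Rightarrow> 'v) \<Rightarrow> 'v set \<Rightarrow> 'v set \<Rightarrow> 'v set \<Rightarrow> bool" where
  "graded_subspace sc E Od S \<longleftrightarrow> module.subspace sc S \<and>
     (\<forall>v\<in>S. \<exists>x\<in>E \<inter> S. \<exists>y\<in>Od \<inter> S. v = x + y)"

definition subalgebra ::
  "(complex \<Rightarrow> 'v::ab_group_add \<Rightarrow> 'v) \<Rightarrow> 'v set \<Rightarrow> 'v set \<Rightarrow> ('v \<Rightarrow> 'v \<Rightarrow> 'v) \<Rightarrow> 'v set \<Rightarrow> bool" where
  "subalgebra sc E Od br S \<longleftrightarrow> graded_subspace sc E Od S \<and>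
     (\<forall>x\<in>S. \<forall>y\<in>S. br x y \<in> S)"

definition super_ideal ::
  "(complex \<Rightarrow> 'v::ab_group_add \<Rightarrow> 'v) \<Rightarrow> 'v set \<Rightarrow> 'v set \<Rightarrow> ('v \<Rightarrow> 'v \<Rightarrow> 'v) \<Rightarrow> 'v set \<Rightarrow> bool" where
  "super_ideal sc E Od br I \<longleftrightarrow> graded_subspace sc E Od I \<and>
     (\<forall>x. \<forall>y\<in>I. br x y \<in> I)"

definition transitive_pair ::
  "(complex \<Rightarrow> 'v::ab_group_add \<Rightarrow> 'v) \<Rightarrow> 'v set \<Rightarrow> 'v set \<Rightarrow> ('v \<Rightarrow> 'v \<Rightarrow> 'v) \<Rightarrow> 'v set \<Rightarrow> bool" where
  "transitive_pair sc E Od br L0 \<longleftrightarrow> subalgebra sc E Od br L0 \<and>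
     (\<forall>I. super_ideal sc E Od br I \<and> I \<subseteq> L0 \<longrightarrow> I = {0})"

definition maximal_subalgebra ::
  "(complex \<Rightarrow> 'v::ab_group_add \<Rightarrow> 'v) \<Rightarrow> 'v set \<Rightarrow> 'v set \<Rightarrow> ('v \<Rightarrow> 'v \<Rightarrow> 'v) \<Rightarrow> 'v set \<Rightarrow> bool" where
  "maximal_subalgebra sc E Od br S \<longleftrightarrow> subalgebra sc E Od br S \<and> S \<noteq> UNIV \<and>
     (\<forall>T. subalgebra sc E Od br T \<and> S \<subseteq> T \<longrightarrow> T = S \<or> T = UNIV)"

text \<open>kernel of the isotropy representation of L0 on L/L0\<close>
definition isotropy_kernel :: "('v \<Rightarrow> 'v \<Rightarrow> 'v) \<Rightarrow> 'v set \<Rightarrow> 'v set" where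
  "isotropy_kernel br L0 = {x \<in> L0. \<forall>y. br x y \<in> L0}"

definition nonlinear_primitive ::
  "(complex \<Rightarrow> 'v::ab_group_add \<Rightarrow> 'v) \<Rightarrow> 'v set \<Rightarrow> 'v set \<Rightarrow> ('v \<Rightarrow> 'v \<Rightarrow> 'v) \<Rightarrow> 'v set \<Rightarrow> bool" where
  "nonlinear_primitive sc E Od br L0 \<longleftrightarrow> transitive_pair sc E Od br L0 \<and>
     maximal_subalgebra sc E Od br L0 \<and> isotropy_kernel br L0 \<noteq> {0}"

definition derived ::
  "(complex \<Rightarrow> 'v::ab_group_add \<Rightarrow> 'v) \<Rightarrow> ('v \<Rightarrow> 'v \<Rightarrow> 'v) \<Rightarrow> 'v set \<Rightarrow> 'v set" where
  "derived sc br I = module.span sc {br x y | x y. x \<in> I \<and> y \<in> I}"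

definition solvable ::
  "(complex \<Rightarrow> 'v::ab_group_add \<Rightarrow> 'v) \<Rightarrow> ('v \<Rightarrow> 'v \<Rightarrow> 'v) \<Rightarrow> 'v set \<Rightarrow> bool" where
  "solvable sc br I \<longleftrightarrow> (\<exists>n. (derived sc br ^^ n) I = {0})"

text \<open>semisimple: the radical (largest solvable ideal) is zero, i.e. every
  solvable ideal is zero\<close>
definition semisimple ::
  "(complex \<Rightarrow> 'v::ab_group_add \<Rightarrow> 'v) \<Rightarrow> 'v set \<Rightarrow> 'v set \<Rightarrow> ('v \<Rightarrow> 'v \<Rightarrow> 'v) \<Rightarrow> bool" where
  "semisimple sc E Od br \<longleftrightarrow>
     (\<forall>I. super_ideal sc E Od br I \<and> solvable sc br I \<longrightarrow> I = {0})"

end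

theory Submission
  imports Defs
begin

text \<open>Maximality of L0 and transitivity give L = L0 + B for every nonzero ideal B.
  If a nonzero ideal A met L0 trivially, the annihilator of A in L0 would be an ideal
  (because L = L0 + A) contained in L0, hence zero; but it contains the isotropy kernel
  L1 \<noteq> 0, since [L1, A] \<subseteq> L0 \<inter> A = 0. So every nonzero ideal meets L0.
  Hence an ideal A annihilated by a nonzero ideal B vanishes: A \<inter> L0 is then an ideal
  (again by L = L0 + B) inside L0. This applies to abelian ideals (B = A), giving
  semisimplicity by induction along the derived series, and to the summands I, J of a
  direct sum, since [J, I] \<subseteq> I \<inter> J = 0.\<close>

locale super_lie_algebra =
  fixes sc :: "complex \<Rightarrow> 'v::ab_group_add \<Rightarrow> 'v"
    and E Od :: "'v set" and br :: "'v \<Rightarrow> 'v \<Rightarrow> 'v"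
  assumes lie_superalgebra: "lie_superalgebra sc E Od br"
begin

sublocale vector_space sc
  using lie_superalgebra unfolding lie_superalgebra_def by blast

lemma even_subspace: "subspace E"
  and odd_subspace: "subspace Od"
  and even_inter_odd: "E \<inter> Od = {0}"
  and even_odd_decomp: "\<exists>x\<in>E. \<exists>y\<in>Od. v = x + y"
  and br_add_left: "br (x + y) z = br x z + br y z"
  and br_add_right: "br x (y + z) = br x y + br x z"
  and br_scale_left: "br (sc c x) y = sc c (br x y)"
  and br_scale_right: "br x (sc c y) = sc c (br x y)"
  and br_parity: "x \<in> hom_part E Od p \<Longrightarrow> y \<in> hom_part E Od q \<Longrightarrow>
      br x y \<in> hom_part E Od (p \<noteq> q)"
  by (insert lie_superalgebra, unfold lie_superalgebra_def, metis+)

lemma br_antisym: "x \<in> hom_part E Od p \<Longrightarrow> y \<in> hom_part E Od q \<Longrightarrow>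
      br x y = - ssign p q (br y x)"
  using lie_superalgebra unfolding lie_superalgebra_def by metis

lemma br_jacobi: "x \<in> hom_part E Od p \<Longrightarrow> y \<in> hom_part E Od q \<Longrightarrow>
      br x (br y z) = br (br x y) z + ssign p q (br y (br x z))"
  using lie_superalgebra unfolding lie_superalgebra_def by metis

lemma hom_part_simps [simp]: "hom_part E Od False = E" "hom_part E Od True = Od"
  by (simp_all add: hom_part_def)

lemma hom_part_subspace: "subspace (hom_part E Od p)"
  by (cases p) (simp_all add: even_subspace odd_subspace)

lemma ssign_mem: "subspace S \<Longrightarrow> v \<in> S \<Longrightarrow> ssign p q v \<in> S"
  by (simp add: ssign_def subspace_neg)

lemma ssign_zero [simp]: "ssign p q 0 = 0"
  by (simp add: ssign_def)

lemma br_zero_left [simp]: "br 0 y = 0"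
  using br_add_left[of 0 0 y] by simp

lemma br_zero_right [simp]: "br x 0 = 0"
  using br_add_right[of x 0 0] by simp

lemma subspace_br_left_vimage: "subspace S \<Longrightarrow> subspace {x. br x y \<in> S}"
  by (rule subspaceI) (simp_all add: subspace_0 subspace_add subspace_scale br_add_left br_scale_left)

lemma subspace_br_right_vimage: "subspace S \<Longrightarrow> subspace {y. br x y \<in> S}"
  by (rule subspaceI) (simp_all add: subspace_0 subspace_add subspace_scale br_add_right br_scale_right)

lemma subspace_left_annihilator: "subspace {x. \<forall>a\<in>A. br x a = 0}"
  by (rule subspaceI) (simp_all add: br_add_left br_scale_left)

lemma homogeneous_sum_eq_0:
  assumes "x \<in> hom_part E Od p" "y \<in> hom_part E Od (\<not> p)" "x + y = 0"
  shows "x = 0 \<and> y = 0"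
proof -
  have "x = - y" using assms(3) by (simp add: eq_neg_iff_add_eq_0)
  then have "x \<in> hom_part E Od p \<inter> hom_part E Od (\<not> p)"
    using assms(1,2) hom_part_subspace subspace_neg by auto
  then have "x = 0" using even_inter_odd by (cases p) auto
  then show ?thesis using assms(3) by simp
qed

lemma UNIV_graded: "graded_subspace sc E Od UNIV"
  unfolding graded_subspace_def using even_odd_decomp by auto

lemma graded_subset_if_homogeneous:
  assumes "subspace S" "graded_subspace sc E Od A"
    and "\<And>p x. x \<in> A \<Longrightarrow> x \<in> hom_part E Od p \<Longrightarrow> x \<in> S"
  shows "A \<subseteq> S"
proof
  fix v assume "v \<in> A"
  then obtain x y where "x \<in> E \<inter> A" "y \<in> Od \<inter> A" "v = x + y"
    using assms(2) unfolding graded_subspace_def by blast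
  then show "v \<in> S"
    using assms(3)[of x False] assms(3)[of y True] subspace_add[OF assms(1)] by simp
qed

lemma graded_pair_induct:
  assumes "graded_subspace sc E Od A" "graded_subspace sc E Od B"
    and "\<And>y. subspace {x. P x y}" "\<And>x. subspace {y. P x y}"
    and "\<And>p q x y. x \<in> A \<Longrightarrow> x \<in> hom_part E Od p \<Longrightarrow> y \<in> B \<Longrightarrow> y \<in> hom_part E Od q \<Longrightarrow> P x y"
    and "x \<in> A" "y \<in> B"
  shows "P x y"
proof -
  have "B \<subseteq> {y. P x' y}" if "x' \<in> A" "x' \<in> hom_part E Od p" for x' p
    using graded_subset_if_homogeneous[OF assms(4) assms(2)] assms(5) that by blast
  then have "A \<subseteq> {x. P x y}"
    using graded_subset_if_homogeneous[OF assms(3) assms(1)] assms(7) by blast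
  then show ?thesis using assms(6) by blast
qed

lemma graded_subspace_inter:
  assumes "graded_subspace sc E Od A" "graded_subspace sc E Od B"
  shows "graded_subspace sc E Od (A \<inter> B)"
  unfolding graded_subspace_def
proof (intro conjI ballI)
  show "subspace (A \<inter> B)"
    using assms subspace_inter unfolding graded_subspace_def by blast
next
  fix v assume "v \<in> A \<inter> B"
  then obtain x y x' y' where xy: "x \<in> E \<inter> A" "y \<in> Od \<inter> A" "v = x + y"
    and xy': "x' \<in> E \<inter> B" "y' \<in> Od \<inter> B" "v = x' + y'"
    using assms unfolding graded_subspace_def by blast
  have "x - x' = y' - y" using xy(3) xy'(3) by (simp add: algebra_simps)
  moreover have "x - x' \<in> E" "y' - y \<in> Od"
    using xy xy' even_subspace odd_subspace subspace_diff by blast+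
  ultimately have "x - x' \<in> E \<inter> Od" by simp
  then have "x - x' = 0" using even_inter_odd by blast
  then have "x = x' \<and> y = y'" using xy(3) xy'(3) by simp
  then show "\<exists>x\<in>E \<inter> (A \<inter> B). \<exists>y\<in>Od \<inter> (A \<inter> B). v = x + y"
    using xy xy' by blast
qed

lemma graded_subspace_sums:
  assumes "graded_subspace sc E Od A" "graded_subspace sc E Od B"
  shows "graded_subspace sc E Od {a + b | a b. a \<in> A \<and> b \<in> B}"
  unfolding graded_subspace_def
proof (intro conjI ballI)
  show "subspace {a + b | a b. a \<in> A \<and> b \<in> B}"
    using assms subspace_sums unfolding graded_subspace_def by blast
next
  fix v assume "v \<in> {a + b | a b. a \<in> A \<and> b \<in> B}"
  then obtain a b where "a \<in> A" "b \<in> B" "v = a + b" by blast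
  then obtain a0 a1 b0 b1 where "a0 \<in> E \<inter> A" "a1 \<in> Od \<inter> A" "b0 \<in> E \<inter> B" "b1 \<in> Od \<inter> B"
      "v = (a0 + a1) + (b0 + b1)"
    using assms unfolding graded_subspace_def by metis
  moreover have "v = (a0 + b0) + (a1 + b1)" using calculation(5) by (simp add: algebra_simps)
  ultimately show "\<exists>x\<in>E \<inter> {a + b | a b. a \<in> A \<and> b \<in> B}.
      \<exists>y\<in>Od \<inter> {a + b | a b. a \<in> A \<and> b \<in> B}. v = x + y"
    using even_subspace odd_subspace subspace_add by blast
qed

lemma graded_subspace_span:
  assumes "\<And>g. g \<in> G \<Longrightarrow> \<exists>x\<in>E \<inter> span G. \<exists>y\<in>Od \<inter> span G. g = x + y"
  shows "graded_subspace sc E Od (span G)"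
proof -
  have "span G \<subseteq> {x + y | x y. x \<in> E \<inter> span G \<and> y \<in> Od \<inter> span G}"
    using assms by (intro span_minimal subspace_sums subspace_inter even_subspace odd_subspace
        subspace_span) blast+
  then show ?thesis unfolding graded_subspace_def by blast
qed

lemma graded_subspace_annihilator:
  assumes "graded_subspace sc E Od S" "graded_subspace sc E Od A"
  shows "graded_subspace sc E Od (S \<inter> {x. \<forall>a\<in>A. br x a = 0})"
  unfolding graded_subspace_def
proof (intro conjI ballI)
  show "subspace (S \<inter> {x. \<forall>a\<in>A. br x a = 0})"
    using assms(1) subspace_inter subspace_left_annihilator unfolding graded_subspace_def by blast
next
  fix v assume v: "v \<in> S \<inter> {x. \<forall>a\<in>A. br x a = 0}"
  then obtain x y where xy: "x \<in> E \<inter> S" "y \<in> Od \<inter> S" "v = x + y"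
    using assms(1) unfolding graded_subspace_def by blast
  have "A \<subseteq> {a. br x a = 0} \<inter> {a. br y a = 0}"
  proof (rule graded_subset_if_homogeneous[OF _ assms(2)])
    show "subspace ({a. br x a = 0} \<inter> {a. br y a = 0})"
      using subspace_br_right_vimage[OF subspace_single_0] by (intro subspace_inter) auto
  next
    fix p a assume "a \<in> A" "a \<in> hom_part E Od p"
    moreover have "br x a + br y a = 0" using v xy calculation(1) by (simp add: br_add_left)
    ultimately show "a \<in> {a. br x a = 0} \<inter> {a. br y a = 0}"
      using xy br_parity[of x False a p] br_parity[of y True a p] homogeneous_sum_eq_0 by auto
  qed
  then show "\<exists>x\<in>E \<inter> (S \<inter> {x. \<forall>a\<in>A. br x a = 0}).
      \<exists>y\<in>Od \<inter> (S \<inter> {x. \<forall>a\<in>A. br x a = 0}). v = x + y"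
    using xy by blast
qed

lemma ideal_graded: "super_ideal sc E Od br I \<Longrightarrow> graded_subspace sc E Od I"
  and ideal_subspace: "super_ideal sc E Od br I \<Longrightarrow> subspace I"
  and ideal_br_right: "super_ideal sc E Od br I \<Longrightarrow> y \<in> I \<Longrightarrow> br x y \<in> I"
  unfolding super_ideal_def graded_subspace_def by blast+

lemma ideal_br_left:
  assumes I: "super_ideal sc E Od br I" and "x \<in> I"
  shows "br x y \<in> I"
proof (rule graded_pair_induct[where P = "\<lambda>x y. br x y \<in> I", OF ideal_graded[OF I] UNIV_graded])
  show "subspace {x. br x y \<in> I}" "subspace {y. br x y \<in> I}" for x y
    using ideal_subspace[OF I] subspace_br_left_vimage subspace_br_right_vimage by blast+
next
  fix p q x y assume "x \<in> I" "x \<in> hom_part E Od p" "y \<in> hom_part E Od q"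
  then show "br x y \<in> I"
    using br_antisym ideal_br_right[OF I] ssign_mem ideal_subspace[OF I] subspace_neg by metis
qed (use assms in auto)

lemma subalgebra_sum_ideal:
  assumes S: "subalgebra sc E Od br S" and B: "super_ideal sc E Od br B"
  shows "subalgebra sc E Od br {s + b | s b. s \<in> S \<and> b \<in> B}"
  unfolding subalgebra_def
proof (intro conjI ballI)
  show "graded_subspace sc E Od {s + b | s b. s \<in> S \<and> b \<in> B}"
    using S ideal_graded[OF B] graded_subspace_sums unfolding subalgebra_def by blast
next
  fix x y assume "x \<in> {s + b | s b. s \<in> S \<and> b \<in> B}" "y \<in> {s + b | s b. s \<in> S \<and> b \<in> B}"
  then obtain s b s' b' where sb: "s \<in> S" "b \<in> B" "s' \<in> S" "b' \<in> B" "x = s + b" "y = s' + b'"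
    by blast
  have "br x y = br s s' + (br s b' + br b s' + br b b')"
    unfolding sb by (simp add: br_add_left br_add_right add.assoc)
  moreover have "br s s' \<in> S" using S sb unfolding subalgebra_def by blast
  moreover have "br s b' + br b s' + br b b' \<in> B"
    using sb ideal_br_left[OF B] ideal_br_right[OF B] ideal_subspace[OF B] subspace_add by metis
  ultimately show "br x y \<in> {s + b | s b. s \<in> S \<and> b \<in> B}" by blast
qed

lemma derived_ideal:
  assumes I: "super_ideal sc E Od br I"
  shows "super_ideal sc E Od br (derived sc br I)"
proof -
  define G where "G = {br x y | x y. x \<in> I \<and> y \<in> I}"
  have derived_eq: "derived sc br I = span G" unfolding derived_def G_def ..
  have br_in_span: "br x y \<in> span G" if "x \<in> I" "y \<in> I" for x y
    using that unfolding G_def by (blast intro: span_base)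
  have "br z (br x y) \<in> span G" if "x \<in> I" "y \<in> I" for x y z
  proof (rule graded_pair_induct[where P = "\<lambda>z x. br z (br x y) \<in> span G",
        OF UNIV_graded ideal_graded[OF I]])
    show "subspace {z. br z (br x y) \<in> span G}" for x
      by (intro subspace_br_left_vimage subspace_span)
    show "subspace {x. br z (br x y) \<in> span G}" for z
      using subspace_br_left_vimage[OF subspace_br_right_vimage[OF subspace_span]] by simp
  next
    fix p q z x assume "x \<in> I" "z \<in> hom_part E Od p" "x \<in> hom_part E Od q"
    then show "br z (br x y) \<in> span G"
      \<comment> \<open>Jacobi: [z,[x,y]] = [[z,x],y] \<plusminus> [x,[z,y]], and both terms are brackets of elements of I\<close>
      using br_jacobi[of z p x q y] br_in_span ideal_br_right[OF I] \<open>y \<in> I\<close>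
        span_add ssign_mem[OF subspace_span] by metis
  qed (use that in auto)
  then have "br z w \<in> span G" if "w \<in> span G" for z w
    using span_minimal[of G "{w. br z w \<in> span G}"] that
      subspace_br_right_vimage[OF subspace_span] unfolding G_def by blast
  moreover have "graded_subspace sc E Od (span G)"
  proof (rule graded_subspace_span)
    fix g assume "g \<in> G"
    then obtain x y where "x \<in> I" "y \<in> I" "g = br x y" unfolding G_def by blast
    then obtain x0 x1 y0 y1 where x: "x0 \<in> E \<inter> I" "x1 \<in> Od \<inter> I" "x = x0 + x1"
      and y: "y0 \<in> E \<inter> I" "y1 \<in> Od \<inter> I" "y = y0 + y1"
      using ideal_graded[OF I] unfolding graded_subspace_def by metis
    have "g = (br x0 y0 + br x1 y1) + (br x0 y1 + br x1 y0)"
      unfolding \<open>g = br x y\<close> x(3) y(3) by (simp add: br_add_left br_add_right algebra_simps)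
    moreover have "br x0 y0 + br x1 y1 \<in> E" "br x0 y1 + br x1 y0 \<in> Od"
      using br_parity[of x0 False y0 False] br_parity[of x1 True y1 True]
        br_parity[of x0 False y1 True] br_parity[of x1 True y0 False]
        x y even_subspace odd_subspace subspace_add by auto
    moreover have "br x0 y0 + br x1 y1 \<in> span G" "br x0 y1 + br x1 y0 \<in> span G"
      using x y br_in_span span_add by auto
    ultimately show "\<exists>x\<in>E \<inter> span G. \<exists>y\<in>Od \<inter> span G. g = x + y" by blast
  qed
  ultimately show ?thesis unfolding derived_eq super_ideal_def by blast
qed

end

locale nonlinear_primitive_pair = super_lie_algebra +
  fixes L0
  assumes nonlinear_primitive: "nonlinear_primitive sc E Od br L0"
begin

lemma L0_subalgebra: "subalgebra sc E Od br L0"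
  and ideal_in_L0_eq_0: "super_ideal sc E Od br I \<Longrightarrow> I \<subseteq> L0 \<Longrightarrow> I = {0}"
  and L0_maximal: "subalgebra sc E Od br T \<Longrightarrow> L0 \<subseteq> T \<Longrightarrow> T = L0 \<or> T = UNIV"
  and isotropy_kernel_nonzero: "isotropy_kernel br L0 \<noteq> {0}"
  using nonlinear_primitive
  unfolding nonlinear_primitive_def transitive_pair_def maximal_subalgebra_def by blast+

lemma L0_graded: "graded_subspace sc E Od L0"
  and L0_br: "x \<in> L0 \<Longrightarrow> y \<in> L0 \<Longrightarrow> br x y \<in> L0"
  using L0_subalgebra unfolding subalgebra_def by blast+

lemma L0_plus_ideal_decomp:
  assumes B: "super_ideal sc E Od br B" "B \<noteq> {0}"
  shows "\<exists>l\<in>L0. \<exists>b\<in>B. z = l + b"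
proof -
  let ?S = "{l + b | l b. l \<in> L0 \<and> b \<in> B}"
  have "L0 \<subseteq> ?S" "B \<subseteq> ?S"
    using subspace_0 ideal_subspace[OF B(1)] L0_graded unfolding graded_subspace_def by force+
  moreover have "\<not> B \<subseteq> L0" using ideal_in_L0_eq_0 B by blast
  ultimately have "?S \<noteq> L0" by blast
  then have "?S = UNIV"
    using L0_maximal[OF subalgebra_sum_ideal[OF L0_subalgebra B(1)] \<open>L0 \<subseteq> ?S\<close>] by blast
  then have "z \<in> ?S" by simp
  then show ?thesis by blast
qed

lemma L0_annihilator_ideal:
  assumes A: "super_ideal sc E Od br A" "A \<noteq> {0}"
  shows "super_ideal sc E Od br (L0 \<inter> {x. \<forall>a\<in>A. br x a = 0})" (is "super_ideal _ _ _ _ ?Z")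
proof -
  have Z_graded: "graded_subspace sc E Od ?Z"
    by (rule graded_subspace_annihilator[OF L0_graded ideal_graded[OF A(1)]])
  have "\<forall>a\<in>A. br (br l x) a = 0" if "l \<in> L0" "x \<in> ?Z" for l x
  proof (rule graded_pair_induct[where P = "\<lambda>l x. \<forall>a\<in>A. br (br l x) a = 0",
        OF L0_graded Z_graded])
    show "subspace {l. \<forall>a\<in>A. br (br l x) a = 0}" "subspace {x. \<forall>a\<in>A. br (br l x) a = 0}" for l x
      using subspace_br_left_vimage[OF subspace_left_annihilator]
        subspace_br_right_vimage[OF subspace_left_annihilator] by simp_all
  next
    fix p q l x assume l: "l \<in> hom_part E Od p" and x: "x \<in> ?Z" "x \<in> hom_part E Od q"
    show "\<forall>a\<in>A. br (br l x) a = 0"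
    proof
      fix a assume "a \<in> A"
      have "br l (br x a) = br (br l x) a + ssign p q (br x (br l a))"
        using l x(2) by (rule br_jacobi)
      then show "br (br l x) a = 0" using x(1) \<open>a \<in> A\<close> ideal_br_right[OF A(1)] by simp
    qed
  qed (use that in auto)
  then have Z_br_L0: "br l x \<in> ?Z" if "l \<in> L0" "x \<in> ?Z" for l x
    using that L0_br by blast
  have A_br_Z: "br a x = 0" if "a \<in> A" "x \<in> ?Z" for a x
  proof (rule graded_pair_induct[where P = "\<lambda>a x. br a x = 0", OF ideal_graded[OF A(1)] Z_graded])
    show "subspace {a. br a x = 0}" "subspace {x. br a x = 0}" for a x
      using subspace_br_left_vimage[OF subspace_single_0]
        subspace_br_right_vimage[OF subspace_single_0] by simp_all
  next
    fix p q a x assume "a \<in> A" "a \<in> hom_part E Od p" "x \<in> ?Z" "x \<in> hom_part E Od q"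
    then show "br a x = 0" using br_antisym[of a p x q] by simp
  qed (use that in auto)
  have "br z x \<in> ?Z" if "x \<in> ?Z" for z x
  proof -
    obtain l a where "l \<in> L0" "a \<in> A" "z = l + a" using L0_plus_ideal_decomp[OF A, of z] by blast
    then have "br z x = br l x" using that A_br_Z by (simp add: br_add_left)
    then show ?thesis using that Z_br_L0 \<open>l \<in> L0\<close> by simp
  qed
  then show ?thesis using Z_graded unfolding super_ideal_def by blast
qed

lemma ideal_inter_L0_nonzero:
  assumes A: "super_ideal sc E Od br A" "A \<noteq> {0}"
  shows "A \<inter> L0 \<noteq> {0}"
proof
  assume A_L0: "A \<inter> L0 = {0}"
  have "isotropy_kernel br L0 \<subseteq> L0 \<inter> {x. \<forall>a\<in>A. br x a = 0}"
    using A_L0 ideal_br_right[OF A(1)] unfolding isotropy_kernel_def by blast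
  moreover have "L0 \<inter> {x. \<forall>a\<in>A. br x a = 0} = {0}"
    using ideal_in_L0_eq_0[OF L0_annihilator_ideal[OF A]] by blast
  moreover have "0 \<in> isotropy_kernel br L0"
    using subspace_0 L0_graded unfolding isotropy_kernel_def graded_subspace_def by simp
  ultimately show False using isotropy_kernel_nonzero by blast
qed

lemma ideal_eq_0_if_annihilated_by_ideal:
  assumes A: "super_ideal sc E Od br A" and B: "super_ideal sc E Od br B" "B \<noteq> {0}"
    and annihilated: "\<And>a b. a \<in> A \<Longrightarrow> b \<in> B \<Longrightarrow> br b a = 0"
  shows "A = {0}"
proof (rule ccontr)
  assume "A \<noteq> {0}"
  have "br z c \<in> A \<inter> L0" if "c \<in> A \<inter> L0" for z c
  proof -
    obtain l b where "l \<in> L0" "b \<in> B" "z = l + b" using L0_plus_ideal_decomp[OF B, of z] by blast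
    then show ?thesis
      using that annihilated ideal_br_right[OF A] L0_br by (simp add: br_add_left)
  qed
  then have "super_ideal sc E Od br (A \<inter> L0)"
    using graded_subspace_inter[OF ideal_graded[OF A] L0_graded] unfolding super_ideal_def by blast
  then have "A \<inter> L0 = {0}" using ideal_in_L0_eq_0 by blast
  then show False using ideal_inter_L0_nonzero A \<open>A \<noteq> {0}\<close> by blast
qed

lemma solvable_ideal_eq_0:
  "super_ideal sc E Od br I \<Longrightarrow> (derived sc br ^^ n) I = {0} \<Longrightarrow> I = {0}"
proof (induction n arbitrary: I)
  case 0
  then show ?case by simp
next
  case (Suc n)
  have "(derived sc br ^^ n) (derived sc br I) = {0}"
    using Suc.prems(2) by (simp only: funpow_Suc_right comp_def)
  then have derived_0: "derived sc br I = {0}" using Suc.IH derived_ideal Suc.prems(1) by blast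
  have abelian: "br b a = 0" if "a \<in> I" "b \<in> I" for a b
  proof -
    have "br b a \<in> {br x y | x y. x \<in> I \<and> y \<in> I}" using that by blast
    then have "br b a \<in> derived sc br I" unfolding derived_def by (rule span_base)
    then show ?thesis using derived_0 by simp
  qed
  show ?case
  proof (cases "I = {0}")
    case False
    show ?thesis by (rule ideal_eq_0_if_annihilated_by_ideal[OF Suc.prems(1) Suc.prems(1) False abelian])
  qed
qed

lemma semisimple_algebra: "semisimple sc E Od br"
  unfolding semisimple_def solvable_def using solvable_ideal_eq_0 by blast

lemma ideal_eq_0_if_disjoint_from_nonzero_ideal:
  assumes "super_ideal sc E Od br I" "super_ideal sc E Od br J" "J \<noteq> {0}" "I \<inter> J = {0}"
  shows "I = {0}"
proof (rule ideal_eq_0_if_annihilated_by_ideal[OF assms(1-3)])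
  show "br j i = 0" if "i \<in> I" "j \<in> J" for i j
    using that ideal_br_right[OF assms(1)] ideal_br_left[OF assms(2)] assms(4) by blast
qed

end

theorem corollary2p2:
  fixes sc :: "complex \<Rightarrow> 'v::ab_group_add \<Rightarrow> 'v"
    and E Od L0 :: "'v set" and br :: "'v \<Rightarrow> 'v \<Rightarrow> 'v"
  assumes "lie_superalgebra sc E Od br"
    and "nonlinear_primitive sc E Od br L0"
  shows "semisimple sc E Od br \<and>
    \<not> (\<exists>I J. super_ideal sc E Od br I \<and> super_ideal sc E Od br J \<and>
           I \<noteq> {0} \<and> J \<noteq> {0} \<and> I \<inter> J = {0} \<and>
           (\<forall>v. \<exists>x\<in>I. \<exists>y\<in>J. v = x + y))"
proof -
  interpret nonlinear_primitive_pair sc E Od br L0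
    using assms by (simp add: nonlinear_primitive_pair_def nonlinear_primitive_pair_axioms_def
        super_lie_algebra_def)
  show ?thesis using semisimple_algebra ideal_eq_0_if_disjoint_from_nonzero_ideal by blast
qed

end
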